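(* Let $\{u_{nm}\}_{0\le n\le m<\infty}$ be an arbitrary family of non-negative real numbers, and let $U:[-1,1]\setminus D\to[0,+\infty]$ be defined by $$U(x)=\sum_{0\le n\le m<+\infty}u_{nm}L_{nm}(x).$$ Then $U$ is non-negative, Lebesgue measurable, and even (i.e. $U(-x)=U(x)$ for all $x\in[-1,1]\setminus D$). Moreover, in $[0,+\infty]$, $$\int_{-1}^{1}U(x)\,dx=2\sum_{k=1}^{\infty}\ \sum_{\substack{m,n\ge 0\\ m-n=2k-1}}4^{-k}\binom{2k}{k}u_{nm},$$ and the essential supremum of $U$ on $[-1,1]$ is attained at $x=\pm\tfrac13$, with $$\|U\|_{L^\infty(-1,1)}=U\!\left(\pm\tfrac13\right)=\sum_{k=1}^{\infty}\ \sum_{\substack{m,n\ge 0\\ m-n=2k-1}}u_{nm}.$$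
   Context: Signed binary expansion: every $x\in[-1,1]$ can be written as $x=\sum_{n=0}^{\infty}x_n2^{-(n+1)}$ with digits $x_n\in\{-1,+1\}$; there is a countable set $D\subset[-1,1]$ (consisting of certain dyadic rationals) outside of which this expansion is unique. For $x\in[-1,1]\setminus D$ with digits $(x_n)_{n\ge0}$ and integers $0\le n\le m$, define the loop-counting function $L_{nm}(x)=1$ if $\sum_{j=n}^{m}x_j=0$ and $L_{nm}(x)=0$ otherwise. (Note $\pm\tfrac13\notin D$: $\tfrac13$ has digits $+1,-1,+1,-1,\dots$ and $-\tfrac13$ has digits $-1,+1,-1,+1,\dots$.) *)

theory Defs
  imports "HOL-Analysis.Analysis" "HOL-Probability.Essential_Supremum"
begin

definition sbexp :: "(nat \<Rightarrow> int) \<Rightarrow> real \<Rightarrow> bool" where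
  "sbexp d x \<longleftrightarrow> (\<forall>n. d n \<in> {-1, 1}) \<and> (\<lambda>n. real_of_int (d n) / 2 ^ (n + 1)) sums x"

definition Dset :: "real set" where
  "Dset = {x \<in> {-1..1}. \<not> (\<exists>!d. sbexp d x)}"

definition digit :: "real \<Rightarrow> nat \<Rightarrow> int" where
  "digit x = (THE d. sbexp d x)"

definition Lnm :: "nat \<Rightarrow> nat \<Rightarrow> real \<Rightarrow> real" where
  "Lnm n m x = (if (\<Sum>j=n..m. digit x j) = 0 then 1 else 0)"

definition Ufun :: "(nat \<Rightarrow> nat \<Rightarrow> real) \<Rightarrow> real \<Rightarrow> ennreal" where
  "Ufun u x = infsum (\<lambda>(n, m). ennreal (u n m * Lnm n m x)) {(n, m). n \<le> m}"

end

theory Submission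
  imports Defs
begin

text \<open>
  Lebesgue measure on \<open>[-1,1]\<close> turns the signed binary digits into independent fair signs:
  fixing the first \<open>N\<close> digits cuts out an interval of length \<open>2/2^N\<close>, up to the countable
  set \<open>D\<close> of dyadic rationals. The function \<open>L\<^sub>n\<^sub>m\<close> is the indicator of the event that the block of
  digits \<open>n..m\<close> is balanced, which has measure \<open>2 \<cdot> 4\<^sup>-\<^sup>k \<cdot> binomial(2k,k)\<close> if \<open>m - n + 1 = 2k\<close>
  and \<open>0\<close> if the block has odd length; Tonelli's theorem for sums gives the integral.
  The point \<open>1/3\<close> has alternating digits, so every block of even length is balanced there and
  \<open>U \<le> U(1/3)\<close> everywhere. Conversely every finite part of the series for \<open>U(1/3)\<close> only sees
  finitely many digits, hence is attained on a whole cylinder around \<open>1/3\<close>, which has positive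
  measure; so \<open>U(1/3)\<close> is also the essential supremum.
\<close>

section \<open>Signed binary expansions\<close>

lemma inverse_two_powers_sums: "(\<lambda>n. 1 / 2 ^ (n+1) :: real) sums 1"
proof -
  have "(\<lambda>n. (1/2::real) ^ n) sums (1 / (1 - 1/2))" by (rule geometric_sums) simp
  then have "(\<lambda>n. (1/2::real) * (1/2) ^ n) sums ((1/2) * (1 / (1 - 1/2)))" by (rule sums_mult)
  then show ?thesis by (simp add: power_divide)
qed

lemma sbexp_abs_le_1:
  assumes "sbexp d x" shows "\<bar>x\<bar> \<le> 1"
proof -
  have s: "(\<lambda>n. real_of_int (d n) / 2 ^ (n + 1)) sums x" and d: "\<And>n. d n \<in> {-1,1}"
    using assms by (auto simp: sbexp_def)
  have term_le: "\<bar>real_of_int (d n) / 2 ^ (n + 1)\<bar> \<le> 1 / 2 ^ (n+1)" for n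
    using d[of n] by auto
  have "x \<le> 1"
    by (rule sums_le[OF _ s inverse_two_powers_sums]) (metis term_le abs_le_iff)
  moreover have "-x \<le> 1"
    by (rule sums_le[OF _ sums_minus[OF s] inverse_two_powers_sums]) (metis term_le abs_le_iff)
  ultimately show ?thesis by simp
qed

lemma sbexp_tail:
  assumes "sbexp d x"
  shows "sbexp (\<lambda>n. d (n+N)) (2^N * (x - (\<Sum>i<N. real_of_int (d i) / 2^(i+1))))"
proof -
  have s: "(\<lambda>n. real_of_int (d n) / 2 ^ (n + 1)) sums x" and d: "\<And>n. d n \<in> {-1,1}"
    using assms by (auto simp: sbexp_def)
  have "(\<lambda>n. real_of_int (d (n+N)) / 2 ^ (n + N + 1))
          sums (x - (\<Sum>i<N. real_of_int (d i) / 2^(i+1)))"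
    using s by (subst sums_iff_shift) simp
  then have "(\<lambda>n. 2^N * (real_of_int (d (n+N)) / 2 ^ (n + N + 1)))
          sums (2^N * (x - (\<Sum>i<N. real_of_int (d i) / 2^(i+1))))"
    by (rule sums_mult)
  moreover have "2^N * (real_of_int (d (n+N)) / 2 ^ (n + N + 1)) = real_of_int (d (n+N)) / 2 ^ (n + 1)"
    for n by (simp add: power_add)
  ultimately show ?thesis using d by (simp add: sbexp_def)
qed

lemma sbexp_prepend:
  assumes w: "\<And>i. i < N \<Longrightarrow> w i \<in> {-1,1}" and e: "sbexp e t"
  shows "sbexp (\<lambda>i. if i < N then w i else e (i - N))
           ((\<Sum>i<N. real_of_int (w i) / 2^(i+1)) + t / 2^N)"
proof -
  have s: "(\<lambda>n. real_of_int (e n) / 2 ^ (n + 1)) sums t" and e_pm: "\<And>n. e n \<in> {-1,1}"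
    using e by (auto simp: sbexp_def)
  define f where "f i = real_of_int (if i < N then w i else e (i - N)) / 2^(i+1)" for i
  have "(\<lambda>n. real_of_int (e n) / 2 ^ (n + 1) / 2^N) sums (t / 2^N)" using s by (rule sums_divide)
  moreover have "f (n + N) = real_of_int (e n) / 2 ^ (n + 1) / 2^N" for n
    by (simp add: f_def power_add)
  ultimately have "(\<lambda>n. f (n+N)) sums (t / 2^N)" by simp
  then have "f sums (t/2^N + (\<Sum>i<N. f i))" by (simp add: sums_iff_shift)
  moreover have "(\<Sum>i<N. f i) = (\<Sum>i<N. real_of_int (w i) / 2^(i+1))"
    by (rule sum.cong) (auto simp: f_def)
  ultimately show ?thesis using w e_pm unfolding sbexp_def f_def by (auto simp: add.commute)
qed

primrec greedy_rem :: "real \<Rightarrow> nat \<Rightarrow> real" where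
  "greedy_rem t 0 = t"
| "greedy_rem t (Suc n) = 2 * greedy_rem t n - (if greedy_rem t n \<ge> 0 then 1 else -1)"

definition greedy_digit :: "real \<Rightarrow> nat \<Rightarrow> int" where
  "greedy_digit t n = (if greedy_rem t n \<ge> 0 then 1 else -1)"

lemma greedy_rem_bound: "\<bar>t\<bar> \<le> 1 \<Longrightarrow> \<bar>greedy_rem t n\<bar> \<le> 1"
  by (induction n) auto

lemma greedy_digit_partial_sum:
  "(\<Sum>i<N. real_of_int (greedy_digit t i) / 2^(i+1)) = t - greedy_rem t N / 2^N"
  by (induction N) (auto simp: greedy_digit_def field_simps)

lemma sbexp_greedy_digit:
  assumes "\<bar>t\<bar> \<le> 1" shows "sbexp (greedy_digit t) t"
proof -
  have "(\<lambda>N. greedy_rem t N / 2^N) \<longlonglongrightarrow> 0"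
  proof (rule Lim_null_comparison)
    show "\<forall>\<^sub>F N in sequentially. norm (greedy_rem t N / 2^N) \<le> (1/2)^N"
      using greedy_rem_bound[OF assms] by (auto simp: power_divide divide_right_mono)
    show "(\<lambda>N. (1/2::real)^N) \<longlonglongrightarrow> 0" by (rule LIMSEQ_realpow_zero) auto
  qed
  then have "(\<lambda>N. t - greedy_rem t N / 2^N) \<longlonglongrightarrow> t - 0" by (intro tendsto_intros)
  then show ?thesis
    unfolding sbexp_def sums_def greedy_digit_partial_sum by (auto simp: greedy_digit_def)
qed

definition dyadics :: "real set" where
  "dyadics = {x. \<exists>k::int. \<exists>i::nat. x * 2^i = of_int k}"

lemma countable_dyadics: "countable dyadics"
proof -
  have "dyadics \<subseteq> (\<lambda>(k::int, i::nat). of_int k / 2^i) ` UNIV"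
  proof
    fix x assume "x \<in> dyadics"
    then obtain k i where "x * 2^i = of_int k" by (auto simp: dyadics_def)
    then have "x = of_int k / 2^i" by (simp add: field_simps)
    then show "x \<in> (\<lambda>(k::int, i::nat). of_int k / 2^i) ` UNIV" by auto
  qed
  then show ?thesis by (rule countable_subset) simp
qed

lemma partial_sum_in_dyadics: "(\<Sum>j<N. real_of_int (d j) / 2^(j+1)) \<in> dyadics"
proof -
  have "\<exists>k::int. (\<Sum>j<N. real_of_int (d j) / 2^(j+1)) * 2^N = of_int k"
  proof (induction N)
    case (Suc N)
    then obtain k where k: "(\<Sum>j<N. real_of_int (d j) / 2^(j+1)) * 2^N = of_int k" by auto
    have "(\<Sum>j<Suc N. real_of_int (d j) / 2^(j+1)) * 2^(Suc N)
        = 2 * ((\<Sum>j<N. real_of_int (d j) / 2^(j+1)) * 2^N) + d N"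
      by (simp add: field_simps)
    then show ?case using k by (metis of_int_add of_int_mult of_int_numeral)
  qed auto
  then show ?thesis by (auto simp: dyadics_def)
qed

text \<open>
  Two expansions of \<open>x\<close> agreeing before position \<open>i\<close> and differing there force both tails
  from \<open>i\<close> on to be extremal, so \<open>x\<close> equals the common partial sum before \<open>i\<close>.
\<close>
lemma sbexp_ambiguous_imp_dyadic:
  assumes d: "sbexp d x" and e: "sbexp e x" and "d \<noteq> e"
  shows "x \<in> dyadics"
proof -
  obtain i where i: "d i \<noteq> e i" and before: "\<And>j. j < i \<Longrightarrow> d j = e j"
    using \<open>d \<noteq> e\<close> exists_least_iff[of "\<lambda>i. d i \<noteq> e i"] by (auto simp: fun_eq_iff)
  define c where "c = (\<Sum>j<i. real_of_int (d j) / 2^(j+1))"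
  have c_e: "c = (\<Sum>j<i. real_of_int (e j) / 2^(j+1))"
    unfolding c_def by (rule sum.cong) (auto simp: before)
  define y where "y = 2^(Suc i) * (x - c)"
  have "\<bar>2^(Suc i) * (x - (c + d i / 2^(i+1)))\<bar> \<le> 1"
    using sbexp_abs_le_1[OF sbexp_tail[OF d, of "Suc i"]] by (simp add: c_def)
  then have y_d: "\<bar>y - d i\<bar> \<le> 1" by (simp add: y_def algebra_simps)
  have "\<bar>2^(Suc i) * (x - (c + e i / 2^(i+1)))\<bar> \<le> 1"
    using sbexp_abs_le_1[OF sbexp_tail[OF e, of "Suc i"]] by (simp add: c_e)
  then have y_e: "\<bar>y - e i\<bar> \<le> 1" by (simp add: y_def algebra_simps)
  have "d i \<in> {-1,1}" "e i \<in> {-1,1}" using d e by (auto simp: sbexp_def)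
  then have "y = 0" using y_d y_e i by (auto simp: abs_le_iff)
  then have "x = c" by (simp add: y_def)
  then show ?thesis using partial_sum_in_dyadics by (simp add: c_def)
qed

lemma Dset_subset_dyadics: "Dset \<subseteq> dyadics"
proof
  fix x assume x: "x \<in> Dset"
  then have "\<bar>x\<bar> \<le> 1" and not_unique: "\<not> (\<exists>!d. sbexp d x)" by (auto simp: Dset_def)
  from \<open>\<bar>x\<bar> \<le> 1\<close> have greedy: "sbexp (greedy_digit x) x" by (rule sbexp_greedy_digit)
  then obtain e where "sbexp e x" "e \<noteq> greedy_digit x" using not_unique by blast
  then show "x \<in> dyadics" using sbexp_ambiguous_imp_dyadic greedy by blast
qed

lemma Dset_null: "Dset \<in> null_sets lebesgue"
  using countable_subset[OF Dset_subset_dyadics countable_dyadics]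
  by (intro null_sets_completionI countable_imp_null_set_lborel)

abbreviation dom_U :: "real set" where "dom_U \<equiv> {-1..1} - Dset"

lemma dom_U_sets: "dom_U \<in> sets lebesgue"
  using Dset_null by auto

lemma dom_U_unique_sbexp: "x \<in> dom_U \<Longrightarrow> \<exists>!d. sbexp d x"
  by (auto simp: Dset_def)

lemma digit_sbexp: "x \<in> dom_U \<Longrightarrow> sbexp (digit x) x"
  unfolding digit_def using dom_U_unique_sbexp by (rule theI')

lemma digit_eqI: "x \<in> dom_U \<Longrightarrow> sbexp d x \<Longrightarrow> digit x = d"
  unfolding digit_def using dom_U_unique_sbexp by (rule the1_equality)

lemma digit_in_signs: "x \<in> dom_U \<Longrightarrow> digit x n \<in> {-1,1}"
  using digit_sbexp by (auto simp: sbexp_def)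

lemma sbexp_uminus: "sbexp d x \<Longrightarrow> sbexp (\<lambda>n. - d n) (-x)"
  unfolding sbexp_def by (auto dest: sums_minus)

lemma dom_U_uminus:
  assumes x: "x \<in> dom_U" shows "-x \<in> dom_U" and "digit (-x) = (\<lambda>n. - digit x n)"
proof -
  have neg: "sbexp (\<lambda>n. - digit x n) (-x)" by (rule sbexp_uminus[OF digit_sbexp[OF x]])
  have "\<exists>!d. sbexp d (-x)"
  proof (rule ex1I[of _ "\<lambda>n. - digit x n"])
    fix e assume "sbexp e (-x)"
    then have "sbexp (\<lambda>n. - e n) x" using sbexp_uminus by fastforce
    then show "e = (\<lambda>n. - digit x n)" using digit_eqI[OF x] by auto
  qed (rule neg)
  then show "-x \<in> dom_U" using x by (auto simp: Dset_def)
  then show "digit (-x) = (\<lambda>n. - digit x n)" using digit_eqI neg by blast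
qed

lemma Lnm_uminus: "x \<in> dom_U \<Longrightarrow> Lnm n m (-x) = Lnm n m x"
  using dom_U_uminus(2)[of x] by (simp add: Lnm_def sum_negf)

lemma Ufun_uminus: "x \<in> dom_U \<Longrightarrow> Ufun u (-x) = Ufun u x"
  by (simp add: Ufun_def Lnm_uminus)

definition alternating :: "nat \<Rightarrow> int" where "alternating n = (-1)^n"

lemma sbexp_alternating: "sbexp alternating (1/3)"
proof -
  have "(\<lambda>n. (-1/2::real) ^ n) sums (1 / (1 - (-1/2)))" by (rule geometric_sums) simp
  then have "(\<lambda>n. (1/2::real) * (-1/2) ^ n) sums ((1/2) * (1 / (1 - (-1/2))))"
    by (rule sums_mult)
  moreover have "(1/2::real) * (-1/2) ^ n = real_of_int (alternating n) / 2^(n+1)" for n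
  proof -
    have "(-1/2::real) ^ n = (-1)^n * (1/2)^n"
      by (metis mult_minus1 power_mult_distrib divide_minus_left)
    then show ?thesis by (simp add: alternating_def power_divide)
  qed
  then have "(\<lambda>n. (1/2::real) * (-1/2) ^ n) = (\<lambda>n. real_of_int (alternating n) / 2^(n+1))"
    by (rule ext)
  moreover have "(1/2::real) * (1 / (1 - (-1/2))) = 1/3" by simp
  ultimately have "(\<lambda>n. real_of_int (alternating n) / 2^(n+1)) sums (1/3)" by metis
  moreover have "alternating n \<in> {-1,1}" for n by (cases "even n") (auto simp: alternating_def)
  ultimately show ?thesis by (simp add: sbexp_def)
qed

lemma third_notin_dyadics: "(1/3::real) \<notin> dyadics"
proof
  assume "(1/3::real) \<in> dyadics"
  then obtain k :: int and i :: nat where "1/3 * 2^i = (of_int k :: real)"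
    by (auto simp: dyadics_def)
  then have "(2::real)^i = of_int (3*k)" by simp
  then have "(2::int)^i = 3*k" by (metis of_int_eq_iff of_int_numeral of_int_power)
  then have "(3::int) dvd 2^i" by simp
  moreover have "prime (3::int)" by simp
  ultimately have "(3::int) dvd 2" using prime_dvd_power by blast
  then show False by simp
qed

lemma third_in_dom_U: "(1/3::real) \<in> dom_U" "-(1/3::real) \<in> dom_U"
proof -
  show third: "(1/3::real) \<in> dom_U" using third_notin_dyadics Dset_subset_dyadics by auto
  then show "-(1/3::real) \<in> dom_U" by (rule dom_U_uminus)
qed

lemma digit_third: "digit (1/3) = alternating"
  by (rule digit_eqI[OF third_in_dom_U(1) sbexp_alternating])

lemma sum_alternating: "(\<Sum>j\<in>{n..<n+L}. alternating j) = (if even L then 0 else (-1)^n)"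
  by (induction L) (auto simp: alternating_def power_add)

lemma Lnm_third: "n \<le> m \<Longrightarrow> Lnm n m (1/3) = (if even (Suc m - n) then 1 else 0)"
  using sum_alternating[of n "Suc m - n"]
  by (simp add: Lnm_def digit_third atLeastLessThanSuc_atLeastAtMost del: One_nat_def)

section \<open>Cylinder sets\<close>

definition sign_pattern :: "nat set \<Rightarrow> nat \<Rightarrow> int" where
  "sign_pattern T i = (if i \<in> T then 1 else -1)"

definition pattern_value :: "nat \<Rightarrow> nat set \<Rightarrow> real" where
  "pattern_value N T = (\<Sum>i<N. real_of_int (sign_pattern T i) / 2^(i+1))"

definition cylinder :: "nat \<Rightarrow> nat set \<Rightarrow> real set" where
  "cylinder N T = {x \<in> dom_U. \<forall>i<N. digit x i = sign_pattern T i}"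

definition plus_positions :: "nat \<Rightarrow> real \<Rightarrow> nat set" where
  "plus_positions N x = {i. i < N \<and> digit x i = 1}"

lemma sum_inverse_two_powers: "(\<Sum>i<N. 1 / 2^(i+1) :: real) = 1 - 1/2^N"
  by (induction N) (auto simp: field_simps)

lemma abs_pattern_value_le: "\<bar>pattern_value N T\<bar> \<le> 1 - 1/2^N"
proof -
  have "\<bar>pattern_value N T\<bar> \<le> (\<Sum>i<N. \<bar>real_of_int (sign_pattern T i) / 2^(i+1)\<bar>)"
    unfolding pattern_value_def by (rule sum_abs)
  also have "\<dots> = (\<Sum>i<N. 1 / 2^(i+1))" by (rule sum.cong) (auto simp: sign_pattern_def)
  finally show ?thesis by (simp only: sum_inverse_two_powers)
qed

lemma cylinder_dist_le:
  assumes "x \<in> cylinder N T" shows "\<bar>x - pattern_value N T\<bar> \<le> 1/2^N"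
proof -
  have x: "x \<in> dom_U" and digits: "\<And>i. i < N \<Longrightarrow> digit x i = sign_pattern T i"
    using assms by (auto simp: cylinder_def)
  have "(\<Sum>i<N. real_of_int (digit x i) / 2^(i+1)) = pattern_value N T"
    unfolding pattern_value_def by (rule sum.cong) (auto simp: digits)
  then have "\<bar>2^N * (x - pattern_value N T)\<bar> \<le> 1"
    using sbexp_abs_le_1[OF sbexp_tail[OF digit_sbexp[OF x], of N]] by auto
  then have "2^N * \<bar>x - pattern_value N T\<bar> \<le> 1" by (simp add: abs_mult)
  then show ?thesis by (simp add: field_simps)
qed

lemma in_cylinderI:
  assumes x: "x \<in> dom_U" and "\<bar>x - pattern_value N T\<bar> < 1/2^N"
  shows "x \<in> cylinder N T"
proof -
  define t where "t = 2^N * (x - pattern_value N T)"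
  have "\<bar>t\<bar> = 2^N * \<bar>x - pattern_value N T\<bar>" by (simp add: t_def abs_mult)
  also have "\<dots> < 2^N * (1/2^N)" using assms(2) by (intro mult_strict_left_mono) auto
  finally have "\<bar>t\<bar> < 1" by simp
  then have "sbexp (greedy_digit t) t" by (intro sbexp_greedy_digit) simp
  then have "sbexp (\<lambda>i. if i < N then sign_pattern T i else greedy_digit t (i - N))
               (pattern_value N T + t / 2^N)"
    unfolding pattern_value_def by (rule sbexp_prepend[rotated]) (auto simp: sign_pattern_def)
  moreover have "pattern_value N T + t / 2^N = x" by (simp add: t_def)
  ultimately have "digit x = (\<lambda>i. if i < N then sign_pattern T i else greedy_digit t (i - N))"
    using digit_eqI[OF x] by simp
  then show ?thesis using x by (auto simp: cylinder_def)
qed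

lemma
  shows cylinder_sets: "cylinder N T \<in> sets lebesgue"
    and emeasure_cylinder: "emeasure lebesgue (cylinder N T) = ennreal (2 / 2^N)"
proof -
  define a where "a = pattern_value N T - 1/2^N"
  define b where "b = pattern_value N T + 1/2^N"
  have ab: "-1 \<le> a" "b \<le> 1" "a \<le> b"
    using abs_pattern_value_le[of N T] by (auto simp: a_def b_def)
  have "{a<..<b} - Dset \<subseteq> cylinder N T"
    using ab by (auto simp: a_def b_def intro!: in_cylinderI)
  moreover have "cylinder N T \<subseteq> {a..b}"
    using cylinder_dist_le by (force simp: a_def b_def abs_le_iff)
  ultimately have eq: "cylinder N T = ({a<..<b} - Dset) \<union> (cylinder N T \<inter> {a, b})"
    by (auto simp: cylinder_def)
  have ends: "cylinder N T \<inter> {a, b} \<in> null_sets lebesgue"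
    by (rule null_sets_completionI, rule finite_imp_null_set_lborel) auto
  have open_part: "{a<..<b} - Dset \<in> sets lebesgue" using Dset_null by auto
  show "cylinder N T \<in> sets lebesgue" by (subst eq) (use open_part ends in auto)
  have "emeasure lebesgue (cylinder N T) = emeasure lebesgue ({a<..<b} - Dset)"
    by (subst eq, rule emeasure_Un_null_set[OF open_part ends])
  also have "\<dots> = emeasure lebesgue {a<..<b}"
    by (rule emeasure_Diff_null_set[OF Dset_null]) simp
  also have "\<dots> = ennreal (2 / 2^N)" using ab by (simp add: a_def b_def)
  finally show "emeasure lebesgue (cylinder N T) = ennreal (2 / 2^N)" .
qed

lemma in_cylinder_plus_positions: "x \<in> dom_U \<Longrightarrow> x \<in> cylinder N (plus_positions N x)"
  using digit_in_signs[of x] by (fastforce simp: cylinder_def plus_positions_def sign_pattern_def)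

lemma plus_positions_eqI: "x \<in> cylinder N T \<Longrightarrow> T \<subseteq> {..<N} \<Longrightarrow> plus_positions N x = T"
  by (auto simp: cylinder_def plus_positions_def sign_pattern_def split: if_splits)

lemma digit_event_eq_Union_cylinders:
  "{x \<in> dom_U. Q (plus_positions N x)} = (\<Union>T\<in>{T. T \<subseteq> {..<N} \<and> Q T}. cylinder N T)"
proof (intro set_eqI iffI)
  fix x assume "x \<in> {x \<in> dom_U. Q (plus_positions N x)}"
  moreover have "plus_positions N x \<subseteq> {..<N}" by (auto simp: plus_positions_def)
  ultimately show "x \<in> (\<Union>T\<in>{T. T \<subseteq> {..<N} \<and> Q T}. cylinder N T)"
    using in_cylinder_plus_positions[of x N] by blast
next
  fix x assume "x \<in> (\<Union>T\<in>{T. T \<subseteq> {..<N} \<and> Q T}. cylinder N T)"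
  then obtain T where "x \<in> cylinder N T" "T \<subseteq> {..<N}" "Q T" by blast
  then show "x \<in> {x \<in> dom_U. Q (plus_positions N x)}"
    using plus_positions_eqI by (auto simp: cylinder_def)
qed

lemma
  shows digit_event_sets: "{x \<in> dom_U. Q (plus_positions N x)} \<in> sets lebesgue"
    and emeasure_digit_event: "emeasure lebesgue {x \<in> dom_U. Q (plus_positions N x)}
          = ennreal (real (card {T. T \<subseteq> {..<N} \<and> Q T}) * (2 / 2^N))"
proof -
  let ?P = "{T. T \<subseteq> {..<N} \<and> Q T}"
  have fin: "finite ?P" by (rule finite_subset[of _ "Pow {..<N}"]) auto
  show "{x \<in> dom_U. Q (plus_positions N x)} \<in> sets lebesgue"
    unfolding digit_event_eq_Union_cylinders using fin cylinder_sets by auto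
  have disj: "disjoint_family_on (cylinder N) ?P"
    unfolding disjoint_family_on_def using plus_positions_eqI by blast
  have "emeasure lebesgue {x \<in> dom_U. Q (plus_positions N x)}
      = (\<Sum>T\<in>?P. emeasure lebesgue (cylinder N T))"
    unfolding digit_event_eq_Union_cylinders
    by (rule sum_emeasure[symmetric]) (use fin disj cylinder_sets in auto)
  also have "\<dots> = of_nat (card ?P) * ennreal (2 / 2^N)" by (simp add: emeasure_cylinder)
  also have "\<dots> = ennreal (real (card ?P) * (2 / 2^N))"
    by (subst ennreal_mult) (auto simp: ennreal_of_nat_eq_real_of_nat)
  finally show "emeasure lebesgue {x \<in> dom_U. Q (plus_positions N x)}
      = ennreal (real (card ?P) * (2 / 2^N))" .
qed

section \<open>Balanced blocks of digits\<close>

lemma sum_signs_eq: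
  assumes "finite F" "\<And>j. j \<in> F \<Longrightarrow> d j \<in> {-1, 1::int}"
  shows "(\<Sum>j\<in>F. d j) = 2 * int (card {j\<in>F. d j = 1}) - int (card F)"
  using assms
proof (induction F rule: finite_induct)
  case (insert a F)
  have "{j \<in> insert a F. d j = 1}
      = (if d a = 1 then insert a {j\<in>F. d j = 1} else {j\<in>F. d j = 1})" by auto
  moreover have "finite {j\<in>F. d j = 1}" "a \<notin> {j\<in>F. d j = 1}" using insert by auto
  ultimately show ?case using insert by auto
qed simp

lemma Lnm_eq_balanced:
  assumes x: "x \<in> dom_U" and "n \<le> m"
  shows "Lnm n m x = (if 2 * card (plus_positions (Suc m) x \<inter> {n..m}) = Suc m - n then 1 else 0)"
proof -
  have "(\<Sum>j=n..m. digit x j) = 2 * int (card {j\<in>{n..m}. digit x j = 1}) - int (card {n..m})"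
    by (rule sum_signs_eq) (use digit_in_signs[OF x] in auto)
  moreover have "{j\<in>{n..m}. digit x j = 1} = plus_positions (Suc m) x \<inter> {n..m}"
    by (auto simp: plus_positions_def)
  ultimately show ?thesis using \<open>n \<le> m\<close> by (auto simp: Lnm_def)
qed

lemma card_subsets_Un_with_card_Int:
  assumes "finite A" "finite B" "A \<inter> B = {}"
  shows "card {T. T \<subseteq> A \<union> B \<and> card (T \<inter> B) = k} = 2 ^ card A * (card B choose k)"
proof -
  let ?split = "\<lambda>(U, V). U \<union> V"
  have eq: "{T. T \<subseteq> A \<union> B \<and> card (T \<inter> B) = k} = ?split ` (Pow A \<times> {V. V \<subseteq> B \<and> card V = k})"
  proof safe
    fix T assume "T \<subseteq> A \<union> B"
    then show "T \<in> ?split ` (Pow A \<times> {V. V \<subseteq> B \<and> card V = card (T \<inter> B)})"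
      by (intro image_eqI[of _ _ "(T \<inter> A, T \<inter> B)"]) auto
  next
    fix U V assume "U \<subseteq> A" "V \<subseteq> B"
    then have "(U \<union> V) \<inter> B = V" using assms(3) by blast
    then show "card ((U \<union> V) \<inter> B) = card V" by simp
  qed auto
  have "inj_on ?split (Pow A \<times> {V. V \<subseteq> B \<and> card V = k})"
  proof (rule inj_onI, clarsimp)
    fix U V U' V' assume "U \<subseteq> A" "V \<subseteq> B" "U' \<subseteq> A" "V' \<subseteq> B" "U \<union> V = U' \<union> V'"
    then show "U = U' \<and> V = V'" using assms(3) by blast
  qed
  then have "card {T. T \<subseteq> A \<union> B \<and> card (T \<inter> B) = k} = card (Pow A) * card {V. V \<subseteq> B \<and> card V = k}"
    unfolding eq by (simp add: card_image card_cartesian_product)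
  then show ?thesis using assms by (simp add: card_Pow n_subsets)
qed

lemma card_balanced_patterns:
  assumes "n \<le> m"
  shows "card {T. T \<subseteq> {..<Suc m} \<and> 2 * card (T \<inter> {n..m}) = Suc m - n}
    = (if even (Suc m - n) then 2^n * ((Suc m - n) choose ((Suc m - n) div 2)) else 0)"
proof (cases "even (Suc m - n)")
  case True
  have "{T. T \<subseteq> {..<Suc m} \<and> 2 * card (T \<inter> {n..m}) = Suc m - n}
      = {T. T \<subseteq> {..<n} \<union> {n..m} \<and> card (T \<inter> {n..m}) = (Suc m - n) div 2}"
    using True assms by (auto simp: lessThan_Suc_atMost)
  also have "card \<dots> = 2^n * ((Suc m - n) choose ((Suc m - n) div 2))"
    by (subst card_subsets_Un_with_card_Int) auto
  finally show ?thesis using True by simp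
next
  case False
  then have "2 * c \<noteq> Suc m - n" for c by (metis dvd_triv_left)
  then show ?thesis using False by simp
qed

definition balanced_set :: "nat \<Rightarrow> nat \<Rightarrow> real set" where
  "balanced_set n m = {x \<in> dom_U. 2 * card (plus_positions (Suc m) x \<inter> {n..m}) = Suc m - n}"

definition balanced_measure :: "nat \<Rightarrow> real" where
  "balanced_measure L = (if even L then 2 * (1/4) ^ (L div 2) * real (L choose (L div 2)) else 0)"

lemma balanced_set_sets [measurable]: "balanced_set n m \<in> sets lebesgue"
  unfolding balanced_set_def by (rule digit_event_sets)

lemma emeasure_balanced_set:
  assumes "n \<le> m"
  shows "emeasure lebesgue (balanced_set n m) = ennreal (balanced_measure (Suc m - n))"
proof -
  let ?P = "{T. T \<subseteq> {..<Suc m} \<and> 2 * card (T \<inter> {n..m}) = Suc m - n}"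
  have "emeasure lebesgue (balanced_set n m) = ennreal (real (card ?P) * (2 / 2^Suc m))"
    unfolding balanced_set_def by (rule emeasure_digit_event)
  also have "real (card ?P) * (2 / 2^Suc m) = balanced_measure (Suc m - n)"
  proof (cases "even (Suc m - n)")
    case True
    then obtain k where k: "Suc m - n = 2 * k" by (rule evenE)
    then have "Suc m = n + 2*k" using assms by simp
    moreover have "(4::real)^k = 2^k * 2^k" by (simp add: power_mult_distrib[symmetric])
    ultimately have "real (2^n * (2*k choose k)) * (2 / 2^Suc m) = 2 * (1/4)^k * real (2*k choose k)"
      by (simp add: power_add power_mult field_simps power2_eq_square)
    then show ?thesis
      using card_balanced_patterns[OF assms] k by (simp add: balanced_measure_def)
  qed (use assms in \<open>simp add: card_balanced_patterns balanced_measure_def\<close>)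
  finally show ?thesis .
qed

lemma Lnm_eq_indicator:
  "x \<in> dom_U \<Longrightarrow> n \<le> m \<Longrightarrow> Lnm n m x = indicator (balanced_set n m) x"
  by (simp add: Lnm_eq_balanced balanced_set_def indicator_def)

section \<open>Unordered sums in \<open>ennreal\<close>\<close>

lemma infsum_ennreal_eq_nn_integral:
  fixes f :: "'a \<Rightarrow> ennreal"
  assumes A: "countable A"
  shows "infsum f A = (\<integral>\<^sup>+x. f x \<partial>count_space A)"
proof (cases "finite A")
  case True then show ?thesis by (simp add: nn_integral_count_space_finite)
next
  case False
  define g where "g = from_nat_into A"
  have bij: "bij_betw g UNIV A" unfolding g_def by (rule bij_betw_from_nat_into[OF A False])
  have "infsum f A = infsum (\<lambda>n. f (g n)) UNIV"
    by (rule infsum_reindex_bij_betw[OF bij, symmetric])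
  also have "\<dots> = (\<Sum>n. f (g n))"
  proof -
    have "(\<lambda>n. f (g n)) sums infsum (\<lambda>n. f (g n)) UNIV"
      by (intro has_sum_imp_sums has_sum_infsum nonneg_summable_on_complete) simp
    then show ?thesis by (simp add: sums_iff)
  qed
  also have "\<dots> = (\<integral>\<^sup>+n. f (g n) \<partial>count_space UNIV)" by (simp add: nn_integral_count_space_nat)
  also have "\<dots> = (\<integral>\<^sup>+x. f x \<partial>count_space A)" by (rule nn_integral_bij_count_space[OF bij])
  finally show ?thesis .
qed

lemma infsum_cmult_right_ennreal:
  fixes f :: "'a \<Rightarrow> ennreal"
  shows "infsum (\<lambda>x. c * f x) A = c * infsum f A"
proof -
  have "infsum (\<lambda>x. c * f x) A = (SUP F\<in>{F. finite F \<and> F \<subseteq> A}. c * sum f F)"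
    by (simp add: nonneg_infsum_complete sum_distrib_left)
  also have "\<dots> = c * (SUP F\<in>{F. finite F \<and> F \<subseteq> A}. sum f F)"
    by (rule SUP_mult_left_ennreal[symmetric])
  finally show ?thesis by (simp add: nonneg_infsum_complete)
qed

lemma infsum_Times_ennreal:
  fixes f :: "'a \<times> 'b \<Rightarrow> ennreal"
  assumes I: "countable I" and J: "countable J"
  shows "infsum f (I \<times> J) = infsum (\<lambda>i. infsum (\<lambda>j. f (i, j)) J) I"
proof -
  interpret J: sigma_finite_measure "count_space J"
    by (rule sigma_finite_measure_count_space_countable[OF J])
  have "infsum f (I \<times> J) = (\<integral>\<^sup>+p. f p \<partial>(count_space I \<Otimes>\<^sub>M count_space J))"
    using I J by (simp add: infsum_ennreal_eq_nn_integral pair_measure_countable)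
  also have "\<dots> = (\<integral>\<^sup>+i. \<integral>\<^sup>+j. f (i, j) \<partial>count_space J \<partial>count_space I)"
    by (rule J.nn_integral_fst[symmetric]) (simp add: pair_measure_countable[OF I J])
  also have "\<dots> = infsum (\<lambda>i. infsum (\<lambda>j. f (i, j)) J) I"
    by (simp add: infsum_ennreal_eq_nn_integral[OF I] infsum_ennreal_eq_nn_integral[OF J])
  finally show ?thesis .
qed

definition odd_gap_pairs :: "nat \<Rightarrow> (nat \<times> nat) set" where
  "odd_gap_pairs k = {(n, m). int m - int n = 2 * int k - 1}"

lemma odd_gap_pairs_eq_range: "k \<ge> 1 \<Longrightarrow> odd_gap_pairs k = range (\<lambda>n. (n, n + 2*k - 1))"
  by (fastforce simp: odd_gap_pairs_def image_iff)

text \<open>Regrouping by the block length \<open>2k\<close>, via the bijection \<open>(k, n) \<mapsto> (n, n + 2k - 1)\<close>.\<close>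
lemma infsum_even_blocks:
  fixes h :: "nat \<Rightarrow> nat \<Rightarrow> ennreal" and w :: "nat \<Rightarrow> ennreal"
  shows "infsum (\<lambda>(n,m). if even (Suc m - n) then w ((Suc m - n) div 2) * h n m else 0) {(n, m). n \<le> m}
       = infsum (\<lambda>k. infsum (\<lambda>(n,m). w k * h n m) (odd_gap_pairs k)) {1..}"
proof -
  define \<phi> :: "nat \<times> nat \<Rightarrow> nat \<times> nat" where "\<phi> = (\<lambda>(k, n). (n, n + 2*k - 1))"
  define G where "G = (\<lambda>(n,m). if even (Suc m - n) then w ((Suc m - n) div 2) * h n m else 0)"
  have "infsum G {(n, m). n \<le> m} = infsum G (\<phi> ` ({1..} \<times> UNIV))"
  proof (rule infsum_cong_neutral)
    fix p assume p: "p \<in> {(n, m). n \<le> m} - \<phi> ` ({1..} \<times> UNIV)"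
    then obtain n m where nm: "p = (n, m)" "n \<le> m" by auto
    have "odd (Suc m - n)"
    proof
      assume "even (Suc m - n)"
      then obtain k where "Suc m - n = 2*k" by (rule evenE)
      then have "k \<ge> 1" "p = \<phi> (k, n)" using nm by (auto simp: \<phi>_def)
      then show False using p by auto
    qed
    then show "G p = 0" using nm by (simp add: G_def)
  qed (auto simp: \<phi>_def)
  also have "\<dots> = infsum (G \<circ> \<phi>) ({1..} \<times> UNIV)"
    by (rule infsum_reindex) (auto simp: \<phi>_def inj_on_def)
  also have "\<dots> = infsum (\<lambda>(k, n). w k * h n (n + 2*k - 1)) ({1..} \<times> UNIV)"
  proof (rule infsum_cong)
    fix p assume "p \<in> {1::nat..} \<times> (UNIV :: nat set)"
    then obtain k n where p: "p = (k, n)" "k \<ge> 1" by auto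
    then have "Suc (n + 2*k - 1) - n = 2 * k" by simp
    then show "(G \<circ> \<phi>) p = (\<lambda>(k, n). w k * h n (n + 2*k - 1)) p"
      using p by (simp add: G_def \<phi>_def)
  qed
  also have "\<dots> = infsum (\<lambda>k. infsum (\<lambda>n. w k * h n (n + 2*k - 1)) UNIV) {1..}"
    by (subst infsum_Times_ennreal) auto
  also have "\<dots> = infsum (\<lambda>k. infsum (\<lambda>(n,m). w k * h n m) (odd_gap_pairs k)) {1..}"
  proof (rule infsum_cong)
    fix k :: nat assume "k \<in> {1..}"
    moreover have "inj (\<lambda>n. (n, n + 2*k - 1))" by (auto intro: injI)
    ultimately show "infsum (\<lambda>n. w k * h n (n + 2*k - 1)) UNIV
        = infsum (\<lambda>(n,m). w k * h n m) (odd_gap_pairs k)"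
      by (simp add: odd_gap_pairs_eq_range infsum_reindex comp_def)
  qed
  finally show ?thesis by (simp add: G_def)
qed

section \<open>Measurability and the integral\<close>

text \<open>\<open>U\<close> extended by \<open>0\<close> outside \<open>[-1,1] - D\<close>, written with indicators so it is defined on all of \<open>\<real>\<close>.\<close>
definition U_ext :: "(nat \<Rightarrow> nat \<Rightarrow> real) \<Rightarrow> real \<Rightarrow> ennreal" where
  "U_ext u x = infsum (\<lambda>(n, m). ennreal (u n m * indicator (balanced_set n m) x)) {(n, m). n \<le> m}"

lemma countable_upper_pairs: "countable {(n::nat, m::nat). n \<le> m}"
  by (rule countable_subset[of _ UNIV]) auto

lemma Ufun_eq_U_ext: "x \<in> dom_U \<Longrightarrow> Ufun u x = U_ext u x"
  unfolding Ufun_def U_ext_def by (rule infsum_cong) (auto simp: Lnm_eq_indicator)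

lemma U_ext_outside: "x \<notin> dom_U \<Longrightarrow> U_ext u x = 0"
  by (auto simp: U_ext_def balanced_set_def intro: infsum_0)

lemma U_ext_measurable: "U_ext u \<in> borel_measurable lebesgue"
proof -
  have eq: "U_ext u = (\<lambda>x. SUP F\<in>{F. finite F \<and> F \<subseteq> {(n, m). n \<le> m}}.
              sum (\<lambda>(n, m). ennreal (u n m * indicator (balanced_set n m) x)) F)"
    unfolding U_ext_def by (intro ext nonneg_infsum_complete) simp
  show ?thesis unfolding eq
    by (rule borel_measurable_SUP) (auto intro: countable_Collect_finite_subset countable_upper_pairs)
qed

lemma Ufun_measurable: "Ufun u \<in> borel_measurable (restrict_space lebesgue dom_U)"
proof (rule measurable_cong[THEN iffD1])
  show "U_ext u \<in> borel_measurable (restrict_space lebesgue dom_U)"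
    by (rule measurable_restrict_space1[OF U_ext_measurable])
qed (simp add: space_restrict_space Ufun_eq_U_ext)

lemma nn_integral_U_ext:
  "(\<integral>\<^sup>+x. U_ext u x \<partial>lebesgue)
     = infsum (\<lambda>(n, m). ennreal (u n m) * ennreal (balanced_measure (Suc m - n))) {(n, m). n \<le> m}"
proof -
  let ?A = "{(n::nat, m::nat). n \<le> m}"
  define g where "g = (\<lambda>p x. case p of (n, m) \<Rightarrow> ennreal (u n m * indicator (balanced_set n m) x))"
  have "(\<integral>\<^sup>+x. U_ext u x \<partial>lebesgue) = (\<integral>\<^sup>+x. \<integral>\<^sup>+p. g p x \<partial>count_space ?A \<partial>lebesgue)"
    unfolding U_ext_def g_def
    by (rule nn_integral_cong) (rule infsum_ennreal_eq_nn_integral[OF countable_upper_pairs])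
  also have "\<dots> = (\<integral>\<^sup>+p. \<integral>\<^sup>+x. g p x \<partial>lebesgue \<partial>count_space ?A)"
    by (rule nn_integral_count_space_nn_integral[OF countable_upper_pairs])
       (auto simp: g_def split: prod.split)
  also have "\<dots> = (\<integral>\<^sup>+p. (case p of (n, m) \<Rightarrow> ennreal (u n m) * ennreal (balanced_measure (Suc m - n)))
                    \<partial>count_space ?A)"
  proof (rule nn_integral_cong, clarify)
    fix n m :: nat assume "(n, m) \<in> space (count_space ?A)"
    then have "n \<le> m" by simp
    have "(\<integral>\<^sup>+x. g (n, m) x \<partial>lebesgue) = (\<integral>\<^sup>+x. ennreal (u n m) * indicator (balanced_set n m) x \<partial>lebesgue)"
      by (rule nn_integral_cong) (auto simp: g_def indicator_def)
    also have "\<dots> = ennreal (u n m) * ennreal (balanced_measure (Suc m - n))"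
      by (simp add: nn_integral_cmult_indicator emeasure_balanced_set[OF \<open>n \<le> m\<close>])
    finally show "(\<integral>\<^sup>+x. g (n, m) x \<partial>lebesgue) = ennreal (u n m) * ennreal (balanced_measure (Suc m - n))" .
  qed
  also have "\<dots> = infsum (\<lambda>(n, m). ennreal (u n m) * ennreal (balanced_measure (Suc m - n))) ?A"
    by (rule infsum_ennreal_eq_nn_integral[OF countable_upper_pairs, symmetric])
  finally show ?thesis .
qed

lemma infsum_balanced_measure:
  assumes nonneg: "\<And>n m. n \<le> m \<Longrightarrow> u n m \<ge> 0"
  shows "infsum (\<lambda>(n, m). ennreal (u n m) * ennreal (balanced_measure (Suc m - n))) {(n, m). n \<le> m}
    = 2 * infsum (\<lambda>k. infsum (\<lambda>(n, m). ennreal ((1/4) ^ k * real ((2*k) choose k) * u n m))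
                         (odd_gap_pairs k)) {1..}"
proof -
  define w where "w k = ennreal (2 * (1/4)^k * real ((2*k) choose k))" for k :: nat
  have "infsum (\<lambda>(n, m). ennreal (u n m) * ennreal (balanced_measure (Suc m - n))) {(n, m). n \<le> m}
      = infsum (\<lambda>(n,m). if even (Suc m - n) then w ((Suc m - n) div 2) * ennreal (u n m) else 0)
          {(n, m). n \<le> m}"
    by (rule infsum_cong) (auto simp: balanced_measure_def w_def mult.commute elim!: evenE)
  also have "\<dots> = infsum (\<lambda>k. infsum (\<lambda>(n,m). w k * ennreal (u n m)) (odd_gap_pairs k)) {1..}"
    by (rule infsum_even_blocks)
  also have "\<dots> = infsum (\<lambda>k. 2 * infsum (\<lambda>(n, m). ennreal ((1/4) ^ k * real ((2*k) choose k) * u n m))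
                         (odd_gap_pairs k)) {1..}"
  proof (rule infsum_cong)
    fix k :: nat assume k: "k \<in> {1..}"
    have "infsum (\<lambda>(n,m). w k * ennreal (u n m)) (odd_gap_pairs k)
        = infsum (\<lambda>(n,m). 2 * ennreal ((1/4) ^ k * real ((2*k) choose k) * u n m)) (odd_gap_pairs k)"
    proof (rule infsum_cong, clarify)
      fix n m assume "(n, m) \<in> odd_gap_pairs k"
      then have "u n m \<ge> 0" using k nonneg by (auto simp: odd_gap_pairs_def)
      then show "w k * ennreal (u n m) = 2 * ennreal ((1/4) ^ k * real ((2*k) choose k) * u n m)"
        by (simp add: w_def ennreal_mult' ennreal_mult'' mult.assoc)
    qed
    then show "infsum (\<lambda>(n,m). w k * ennreal (u n m)) (odd_gap_pairs k)
        = 2 * infsum (\<lambda>(n, m). ennreal ((1/4) ^ k * real ((2*k) choose k) * u n m)) (odd_gap_pairs k)"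
      by (simp add: case_prod_unfold infsum_cmult_right_ennreal)
  qed
  also have "\<dots> = 2 * infsum (\<lambda>k. infsum (\<lambda>(n, m). ennreal ((1/4) ^ k * real ((2*k) choose k) * u n m))
                         (odd_gap_pairs k)) {1..}"
    by (rule infsum_cmult_right_ennreal)
  finally show ?thesis .
qed

lemma set_nn_integral_Ufun:
  assumes "\<And>n m. n \<le> m \<Longrightarrow> u n m \<ge> 0"
  shows "set_nn_integral lebesgue dom_U (Ufun u)
    = 2 * infsum (\<lambda>k. infsum (\<lambda>(n, m). ennreal ((1/4) ^ k * real ((2*k) choose k) * u n m))
                         (odd_gap_pairs k)) {1..}"
proof -
  have "set_nn_integral lebesgue dom_U (Ufun u) = (\<integral>\<^sup>+x. U_ext u x \<partial>lebesgue)"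
    by (rule nn_integral_cong) (auto simp: Ufun_eq_U_ext U_ext_outside indicator_def)
  then show ?thesis by (simp only: nn_integral_U_ext infsum_balanced_measure[OF assms])
qed

section \<open>The essential supremum\<close>

lemma Ufun_third: "Ufun u (1/3) = infsum (\<lambda>k. infsum (\<lambda>(n, m). ennreal (u n m)) (odd_gap_pairs k)) {1..}"
proof -
  have "Ufun u (1/3) = infsum (\<lambda>(n,m). if even (Suc m - n) then (\<lambda>_. 1) ((Suc m - n) div 2) * ennreal (u n m) else 0)
                         {(n, m). n \<le> m}"
    unfolding Ufun_def by (rule infsum_cong) (auto simp: Lnm_third)
  also have "\<dots> = infsum (\<lambda>k. infsum (\<lambda>(n,m). (\<lambda>_. 1) k * ennreal (u n m)) (odd_gap_pairs k)) {1..}"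
    by (rule infsum_even_blocks)
  finally show ?thesis by simp
qed

lemma Lnm_le_Lnm_third:
  assumes "x \<in> dom_U" "n \<le> m" shows "Lnm n m x \<le> Lnm n m (1/3)"
proof (cases "2 * card (plus_positions (Suc m) x \<inter> {n..m}) = Suc m - n")
  case True
  then have "even (Suc m - n)" by (metis dvd_triv_left)
  with True show ?thesis by (simp add: Lnm_third[OF assms(2)] Lnm_eq_balanced[OF assms])
qed (simp add: Lnm_third[OF assms(2)] Lnm_eq_balanced[OF assms])

lemma Ufun_le_Ufun_third:
  assumes "x \<in> dom_U" and nonneg: "\<And>n m. n \<le> m \<Longrightarrow> u n m \<ge> 0"
  shows "Ufun u x \<le> Ufun u (1/3)"
  unfolding Ufun_def
  by (intro infsum_mono nonneg_summable_on_complete)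
     (auto intro!: ennreal_leI mult_left_mono Lnm_le_Lnm_third assms)

text \<open>Lower semicontinuity of \<open>U\<close> for the topology of cylinders: a finite part of the series
  only involves finitely many digits.\<close>
lemma Ufun_gt_on_cylinder:
  assumes y: "y \<in> dom_U" and "z < Ufun u y"
  obtains N where "\<And>x. x \<in> cylinder N (plus_positions N y) \<Longrightarrow> z < Ufun u x"
proof -
  define t where "t x = (\<lambda>(n,m). ennreal (u n m * Lnm n m x))" for x
  have sup: "Ufun u x = (SUP F\<in>{F. finite F \<and> F \<subseteq> {(n, m). n \<le> m}}. sum (t x) F)" for x
    unfolding Ufun_def t_def by (rule nonneg_infsum_complete) simp
  obtain F where F: "finite F" "F \<subseteq> {(n, m). n \<le> m}" "z < sum (t y) F"
    using \<open>z < Ufun u y\<close> unfolding sup by (auto simp: less_SUP_iff)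
  define N where "N = Suc (Max (snd ` F))"
  have m_less: "m < N" if "(n, m) \<in> F" for n m
    using F(1) that by (auto simp: N_def less_Suc_eq_le intro!: Max_ge image_eqI[of _ snd "(n, m)"])
  show thesis
  proof
    fix x assume x: "x \<in> cylinder N (plus_positions N y)"
    have same_digits: "digit x j = digit y j" if "j < N" for j
      using x in_cylinder_plus_positions[OF y, of N] that by (auto simp: cylinder_def)
    have "sum (t x) F = sum (t y) F"
    proof (rule sum.cong[OF refl], clarify)
      fix n m assume "(n, m) \<in> F"
      then have "m < N" by (rule m_less)
      then have "(\<Sum>j=n..m. digit x j) = (\<Sum>j=n..m. digit y j)"
        using same_digits by (intro sum.cong) auto
      then show "t x (n, m) = t y (n, m)" by (simp add: t_def Lnm_def)
    qed
    moreover have "sum (t x) F \<le> Ufun u x" unfolding sup[of x] by (rule SUP_upper) (use F in auto)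
    ultimately show "z < Ufun u x" using F(3) by simp
  qed
qed

lemma Ufun_le_if_AE_le:
  assumes ae: "AE x in restrict_space lebesgue dom_U. Ufun u x \<le> z" and y: "y \<in> dom_U"
  shows "Ufun u y \<le> z"
proof (rule ccontr)
  assume "\<not> Ufun u y \<le> z"
  then obtain N where above: "\<And>x. x \<in> cylinder N (plus_positions N y) \<Longrightarrow> z < Ufun u x"
    using Ufun_gt_on_cylinder[OF y] by (metis not_le)
  have "AE x in lebesgue. x \<in> dom_U \<longrightarrow> Ufun u x \<le> z"
    using ae by (simp add: AE_restrict_space_iff dom_U_sets)
  then obtain Z where Z: "{x \<in> space lebesgue. \<not> (x \<in> dom_U \<longrightarrow> Ufun u x \<le> z)} \<subseteq> Z"
      "emeasure lebesgue Z = 0" "Z \<in> sets lebesgue"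
    by (rule AE_E)
  have "cylinder N (plus_positions N y) \<subseteq> Z"
    using Z(1) above by (force simp: cylinder_def not_le)
  then have "emeasure lebesgue (cylinder N (plus_positions N y)) \<le> 0"
    using emeasure_mono[OF _ Z(3)] Z(2) by metis
  then show False by (simp add: emeasure_cylinder)
qed

lemma esssup_Ufun:
  assumes "\<And>n m. n \<le> m \<Longrightarrow> u n m \<ge> 0"
  shows "esssup (restrict_space lebesgue dom_U) (Ufun u) = Ufun u (1/3)"
proof (rule antisym)
  show "esssup (restrict_space lebesgue dom_U) (Ufun u) \<le> Ufun u (1/3)"
    by (rule esssup_I[OF Ufun_measurable], rule AE_I2)
       (auto simp: space_restrict_space intro: Ufun_le_Ufun_third assms)
  show "Ufun u (1/3) \<le> esssup (restrict_space lebesgue dom_U) (Ufun u)"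
    unfolding esssup_eq_AE[OF Ufun_measurable]
  proof (rule Inf_greatest)
    fix z assume "z \<in> {z. AE x in restrict_space lebesgue dom_U. Ufun u x \<le> z}"
    then show "Ufun u (1/3) \<le> z" by (intro Ufun_le_if_AE_le third_in_dom_U(1)) simp
  qed
qed

theorem theorem1:
  fixes u :: "nat \<Rightarrow> nat \<Rightarrow> real"
  assumes nonneg: "\<And>n m. n \<le> m \<Longrightarrow> u n m \<ge> 0"
  shows "(\<forall>x \<in> {-1..1} - Dset. Ufun u x \<ge> 0)
    \<and> Ufun u \<in> borel_measurable (restrict_space lebesgue ({-1..1} - Dset))
    \<and> (\<forall>x \<in> {-1..1} - Dset. -x \<in> {-1..1} - Dset \<and> Ufun u (-x) = Ufun u x)
    \<and> (set_nn_integral lebesgue ({-1..1} - Dset) (Ufun u)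
        = 2 * infsum (\<lambda>k. infsum (\<lambda>(n, m). ennreal ((1/4) ^ k * real ((2*k) choose k) * u n m))
                         {(n, m). int m - int n = 2 * int k - 1}) {1..})
    \<and> 1/3 \<notin> Dset \<and> -1/3 \<notin> Dset
    \<and> esssup (restrict_space lebesgue ({-1..1} - Dset)) (Ufun u) = Ufun u (1/3)
    \<and> Ufun u (-1/3) = Ufun u (1/3)
    \<and> Ufun u (1/3) = infsum (\<lambda>k. infsum (\<lambda>(n, m). ennreal (u n m))
                         {(n, m). int m - int n = 2 * int k - 1}) {1..}"
proof -
  have minus_third: "-1/3 = -(1/3::real)" by simp
  show ?thesis
    using Ufun_measurable dom_U_uminus(1) Ufun_uminus set_nn_integral_Ufun[OF nonneg]
      third_in_dom_U esssup_Ufun[OF nonneg] Ufun_uminus[OF third_in_dom_U(1)] Ufun_third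
    unfolding minus_third odd_gap_pairs_def by auto
qed

end
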